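(* Let $f:\mathbb{R}^n\to\mathbb{R}$ be differentiable, $\mu$-strongly convex, with $L$-Lipschitz gradient $\nabla f$, and let $x^*$ be its unique minimizer. Let $\mathcal{E}^t$ denote the event $\|\nabla f(x^t)\|_\infty\le\eta$. Then the iterate $x^{t+1}$ of Markov gradient descent satisfies $$\mathbb{E}\left[\|x^{t+1}-x^*\|_2^2\,\middle|\,x^t,\mathcal{E}^t\right]\le\Big(1-\frac{2\alpha\mu}{\eta}\Big)\|x^t-x^*\|_2^2+\frac{L\alpha^2\sqrt{n}}{\eta}\|x^t-x^*\|_2 .$$
   Context: A differentiable $f$ is $\mu$-strongly convex if $\langle\nabla f(x)-\nabla f(y),x-y\rangle\ge\mu\|x-y\|_2^2$ for all $x,y$. Markov gradient descent (MGD) with lattice resolution $\alpha>0$ and normalizer $\eta>0$: start at $x^0\in\alpha\mathbb{Z}^n$; at step $t$, for each coordinate $i$, conditionally on $x^t$, $\Delta^t_i\in\{0,1\}$ is Bernoulli with $\mathbb{P}[\Delta^t_i=1\mid x^t]=\min(|\partial_i f(x^t)|/\eta,1)$, and $x^{t+1}_i=x^t_i-\alpha\,\mathrm{sgn}(\partial_i f(x^t))\Delta^t_i$. *)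

theory Defs
  imports "HOL-Analysis.Analysis" "HOL-Probability.Probability"
begin

definition lattice :: "real \<Rightarrow> (real ^ 'n) set" where
  "lattice \<alpha> = {x. \<exists>k :: 'n \<Rightarrow> int. x = (\<chi> i. \<alpha> * of_int (k i))}"

definition linf_norm :: "real ^ 'n \<Rightarrow> real" where
  "linf_norm v = Max (range (\<lambda>i. \<bar>v $ i\<bar>))"

text \<open>One step of Markov gradient descent from state x, where grad is the gradient of f:
  the distribution of x^{t+1} conditionally on x^t = x.\<close>
definition mgd_step :: "real \<Rightarrow> real \<Rightarrow> (real ^ 'n \<Rightarrow> real ^ 'n) \<Rightarrow> real ^ 'n \<Rightarrow> (real ^ 'n) pmf" where
  "mgd_step \<alpha> \<eta> grad x =
     map_pmf (\<lambda>\<Delta>. \<chi> i. x $ i - \<alpha> * sgn (grad x $ i) * (if \<Delta> i then 1 else 0))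
       (Pi_pmf UNIV False (\<lambda>i. bernoulli_pmf (min (\<bar>grad x $ i\<bar> / \<eta>) 1)))"

end

theory Submission
  imports Defs
begin

text \<open>On the event \<open>\<parallel>\<nabla>f(x)\<parallel>\<^sub>\<infinity> \<le> \<eta>\<close> no probability \<open>\<bar>\<partial>\<^sub>if(x)\<bar>/\<eta>\<close> is truncated, and since the
  squared distance is a sum over coordinates, linearity of expectation (only the Bernoulli
  marginals matter) lets the expected squared distance to any point \<open>z\<close> after one step
  be computed exactly: it is \<open>\<parallel>x - z\<parallel>\<^sup>2 - 2\<alpha>/\<eta> \<langle>\<nabla>f(x), x - z\<rangle> + \<alpha>\<^sup>2/\<eta> \<parallel>\<nabla>f(x)\<parallel>\<^sub>1\<close>.
  For \<open>z = x\<^sup>*\<close>, where the gradient vanishes, strong convexity bounds the inner product from below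
  by \<open>\<mu>\<parallel>x - x\<^sup>*\<parallel>\<^sup>2\<close>, and the Lipschitz bound together with \<open>\<parallel>v\<parallel>\<^sub>1 \<le> \<surd>n \<parallel>v\<parallel>\<^sub>2\<close> bounds the
  last term by \<open>\<alpha>\<^sup>2 L \<surd>n/\<eta> \<parallel>x - x\<^sup>*\<parallel>\<close>.\<close>

lemma gradient_eq_0_at_minimizer:
  fixes f :: "'a::real_inner \<Rightarrow> real"
  assumes "(f has_derivative (\<lambda>h. g \<bullet> h)) (at x)" and "\<And>y. f x \<le> f y"
  shows "g = 0"
proof -
  have "(\<lambda>h. g \<bullet> h) = (\<lambda>h. 0)"
    using differential_zero_maxmin[of x UNIV f] assms by auto
  then have "g \<bullet> g = 0" by metis
  then show ?thesis by simp
qed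

lemma sum_abs_le_sqrt_card_mult_norm:
  fixes v :: "real ^ 'n"
  shows "(\<Sum>i\<in>UNIV. \<bar>v $ i\<bar>) \<le> sqrt (real CARD('n)) * norm v"
  using L2_set_mult_ineq[of "\<lambda>i. \<bar>v $ i\<bar>" "\<lambda>i. 1" UNIV]
  by (simp add: norm_vec_def L2_set_constant mult.commute)

lemma power2_norm_vec_eq_sum: "(norm (v :: real ^ 'n))\<^sup>2 = (\<Sum>i\<in>UNIV. (v $ i)\<^sup>2)"
  unfolding power2_norm_eq_inner inner_vec_def by (simp add: power2_eq_square)

lemma abs_component_le_linf_norm: "\<bar>v $ i\<bar> \<le> linf_norm v"
  unfolding linf_norm_def by (rule Max_ge) auto

lemma expectation_Pi_pmf_bernoulli_sum:
  assumes "finite I" and "\<And>i. i \<in> I \<Longrightarrow> 0 \<le> p i \<and> p i \<le> 1"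
  shows "measure_pmf.expectation (Pi_pmf I dflt (\<lambda>i. bernoulli_pmf (p i))) (\<lambda>\<Delta>. \<Sum>i\<in>I. h i (\<Delta> i))
       = (\<Sum>i\<in>I. h i True * p i + h i False * (1 - p i))"
proof -
  let ?P = "Pi_pmf I dflt (\<lambda>i. bernoulli_pmf (p i))"
  have marginal: "map_pmf (\<lambda>\<Delta>. \<Delta> i) ?P = bernoulli_pmf (p i)" if "i \<in> I" for i
    using Pi_pmf_component[OF \<open>finite I\<close>, of i dflt "\<lambda>i. bernoulli_pmf (p i)"] that by simp
  have "integrable ?P (\<lambda>\<Delta>. h i (\<Delta> i))" if "i \<in> I" for i
    using integrable_map_pmf_eq[where f = "\<lambda>\<Delta>. \<Delta> i" and p = ?P and g = "h i"] marginal[OF that]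
    by (simp add: integrable_measure_pmf_finite)
  then have "measure_pmf.expectation ?P (\<lambda>\<Delta>. \<Sum>i\<in>I. h i (\<Delta> i))
      = (\<Sum>i\<in>I. measure_pmf.expectation (map_pmf (\<lambda>\<Delta>. \<Delta> i) ?P) (h i))"
    by (subst Bochner_Integration.integral_sum) auto
  also have "\<dots> = (\<Sum>i\<in>I. h i True * p i + h i False * (1 - p i))"
    using marginal assms(2) by (intro sum.cong) auto
  finally show ?thesis .
qed

lemma expectation_mgd_step_dist_sq:
  assumes "\<eta> > 0" and "linf_norm (grad x) \<le> \<eta>"
  shows "measure_pmf.expectation (mgd_step \<alpha> \<eta> grad x) (\<lambda>y. (norm (y - z))\<^sup>2)
       = (norm (x - z))\<^sup>2 - 2 * \<alpha> / \<eta> * (grad x \<bullet> (x - z))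
         + \<alpha>\<^sup>2 / \<eta> * (\<Sum>i\<in>UNIV. \<bar>grad x $ i\<bar>)"
proof -
  define g where "g = grad x"
  define d where "d = x - z"
  define h where "h i b = (d $ i - \<alpha> * sgn (g $ i) * (if b then 1 else 0))\<^sup>2" for i b
  have g_le: "\<bar>g $ i\<bar> \<le> \<eta>" for i
    using abs_component_le_linf_norm[of g i] assms(2) by (simp add: g_def)
  then have p_eq: "min (\<bar>g $ i\<bar> / \<eta>) 1 = \<bar>g $ i\<bar> / \<eta>" for i
    using \<open>\<eta> > 0\<close> by simp
  have "measure_pmf.expectation (mgd_step \<alpha> \<eta> grad x) (\<lambda>y. (norm (y - z))\<^sup>2)
      = measure_pmf.expectation (Pi_pmf UNIV False (\<lambda>i. bernoulli_pmf (\<bar>g $ i\<bar> / \<eta>)))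
          (\<lambda>\<Delta>. \<Sum>i\<in>UNIV. h i (\<Delta> i))"
    unfolding mgd_step_def integral_map_pmf p_eq g_def[symmetric]
    by (simp add: power2_norm_vec_eq_sum h_def d_def algebra_simps)
  also have "\<dots> = (\<Sum>i\<in>UNIV. h i True * (\<bar>g $ i\<bar> / \<eta>) + h i False * (1 - \<bar>g $ i\<bar> / \<eta>))"
    using g_le \<open>\<eta> > 0\<close> by (intro expectation_Pi_pmf_bernoulli_sum) auto
  also have "\<dots> = (\<Sum>i\<in>UNIV. (d $ i)\<^sup>2 - 2 * \<alpha> / \<eta> * (g $ i * d $ i) + \<alpha>\<^sup>2 / \<eta> * \<bar>g $ i\<bar>)"
  proof (intro sum.cong refl)
    fix i
    show "h i True * (\<bar>g $ i\<bar> / \<eta>) + h i False * (1 - \<bar>g $ i\<bar> / \<eta>)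
        = (d $ i)\<^sup>2 - 2 * \<alpha> / \<eta> * (g $ i * d $ i) + \<alpha>\<^sup>2 / \<eta> * \<bar>g $ i\<bar>"
      using \<open>\<eta> > 0\<close> unfolding h_def
      by (cases "g $ i > 0"; cases "g $ i < 0") (auto simp: field_simps power2_eq_square)
  qed
  also have "\<dots> = (norm d)\<^sup>2 - 2 * \<alpha> / \<eta> * (g \<bullet> d) + \<alpha>\<^sup>2 / \<eta> * (\<Sum>i\<in>UNIV. \<bar>g $ i\<bar>)"
    by (simp add: power2_norm_vec_eq_sum sum.distrib sum_subtractf sum_distrib_left inner_vec_def)
  finally show ?thesis by (simp add: g_def d_def)
qed

theorem corollary6p4:
  fixes f :: "real ^ 'n \<Rightarrow> real" and grad :: "real ^ 'n \<Rightarrow> real ^ 'n"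
    and \<mu> L \<alpha> \<eta> :: real and xstar x :: "real ^ 'n"
  assumes deriv: "\<And>y. (f has_derivative (\<lambda>h. grad y \<bullet> h)) (at y)"
    and mu_pos: "\<mu> > 0"
    and strongly_convex: "\<And>y z. (grad y - grad z) \<bullet> (y - z) \<ge> \<mu> * (norm (y - z))\<^sup>2"
    and lipschitz: "\<And>y z. norm (grad y - grad z) \<le> L * norm (y - z)"
    and minimizer: "\<And>y. f xstar \<le> f y"
    and alpha_pos: "\<alpha> > 0" and eta_pos: "\<eta> > 0"
    and x_lattice: "x \<in> lattice \<alpha>"
    and event: "linf_norm (grad x) \<le> \<eta>"
  shows "measure_pmf.expectation (mgd_step \<alpha> \<eta> grad x) (\<lambda>y. (norm (y - xstar))\<^sup>2)
           \<le> (1 - 2 * \<alpha> * \<mu> / \<eta>) * (norm (x - xstar))\<^sup>2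
              + L * \<alpha>\<^sup>2 * sqrt (real CARD('n)) / \<eta> * norm (x - xstar)"
proof -
  have "grad xstar = 0"
    using gradient_eq_0_at_minimizer[OF deriv minimizer] .
  then have descent: "\<mu> * (norm (x - xstar))\<^sup>2 \<le> grad x \<bullet> (x - xstar)"
    and grad_bound: "norm (grad x) \<le> L * norm (x - xstar)"
    using strongly_convex[of x xstar] lipschitz[of x xstar] by simp_all
  have "(\<Sum>i\<in>UNIV. \<bar>grad x $ i\<bar>) \<le> sqrt (real CARD('n)) * (L * norm (x - xstar))"
    using sum_abs_le_sqrt_card_mult_norm[of "grad x"] grad_bound
    by (meson mult_left_mono order_trans real_sqrt_ge_zero of_nat_0_le_iff)
  then have "\<alpha>\<^sup>2 / \<eta> * (\<Sum>i\<in>UNIV. \<bar>grad x $ i\<bar>) \<le> \<alpha>\<^sup>2 / \<eta> * (sqrt (real CARD('n)) * (L * norm (x - xstar)))"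
    using eta_pos by (intro mult_left_mono) auto
  moreover have "2 * \<alpha> / \<eta> * (\<mu> * (norm (x - xstar))\<^sup>2) \<le> 2 * \<alpha> / \<eta> * (grad x \<bullet> (x - xstar))"
    using descent eta_pos alpha_pos by (intro mult_left_mono) auto
  ultimately show ?thesis
    using expectation_mgd_step_dist_sq[where \<alpha> = \<alpha> and z = xstar and grad = grad and x = x, OF eta_pos event]
    by (simp add: field_simps)
qed

end
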